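(* Let $\widetilde{\Sigma}=\widetilde{\Sigma}_1\uplus\cdots\uplus\widetilde{\Sigma}_n$ for pairwise disjoint visibly pushdown alphabets $\widetilde{\Sigma}_i$. If $\prec$ is a visibly pushdown contextual order on $\widetilde{\Sigma}$, then $\mathrm{red}_\prec(\widetilde{\Sigma}^* )$ is a visibly pushdown language.
   Context: A visibly pushdown (VP) alphabet is a finite alphabet partitioned into calls $\Sigma^{\mathsf{call}}$, returns $\Sigma^{\mathsf{ret}}$ and internals $\Sigma^{\mathsf{int}}$; $\widetilde{\Sigma}$ is the VP alphabet whose calls/returns/internals are the unions of those of the $\widetilde{\Sigma}_i$. A visibly pushdown automaton (VPA) $(Q,Q^{\mathsf{in}},\Gamma,\delta,Q^{\mathsf F})$ has a stack alphabet $\Gamma$ with bottom symbol $\bot$; on a call it moves to a new state and pushes a symbol of $\Gamma\setminus\{\bot\}$, on a return it pops the top symbol (reading $\bot$ when the stack is empty, which is not removed), on an internal it leaves the stack unchanged; it accepts when it ends in a state of $Q^{\mathsf F}$. A visibly pushdown language is one accepted by a VPA. The VPA is deterministic if it has one initial state and at most one transition per state/letter (and top-of-stack symbol for returns), and complete if it has at least one. Let $\mathbb{I}=\{(a,b):a\in\widetilde{\Sigma}_i,b\in\widetilde{\Sigma}_j,i\ne j\}$ and $\equiv_{\mathbb{I}}$ the least reflexive transitive relation on $\widetilde{\Sigma}^*$ with $uabv\equiv_{\mathbb{I}}ubav$ for $(a,b)\in\mathbb{I}$. A contextual order is a map $\prec$ from $\widetilde{\Sigma}^*$ to strict total orders on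 $\widetilde{\Sigma}$, $x\mapsto\prec_x$; it induces $\preceq$ on $\widetilde{\Sigma}^*$: $\sigma\preceq\rho$ iff $\sigma$ is a prefix of $\rho$ or $\sigma=\alpha a\beta$, $\rho=\alpha b\gamma$ with $a\prec_\alpha b$. For a language $L$, $\mathrm{red}_\prec(L)=\{w\in L:\forall u\in L,\ (u\equiv_{\mathbb{I}}w\wedge u\preceq w)\Rightarrow u=w\}$. A contextual order $\prec$ is visibly pushdown if there is a complete deterministic VPA $A$ over $\widetilde{\Sigma}$ and a map $\mathsf{ord}$ from states of $A$ to strict total orders on $\widetilde{\Sigma}$ such that for every $w\in\widetilde{\Sigma}^*$, $\prec_w=\mathsf{ord}(q)$ where $q$ is the state reached by $A$ after reading $w$. *)

theory Defs
  imports Main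
begin

type_synonym 'a vpalph = "'a set \<times> 'a set \<times> 'a set"

definition calls :: "'a vpalph \<Rightarrow> 'a set" where "calls S = fst S"
definition rets :: "'a vpalph \<Rightarrow> 'a set" where "rets S = fst (snd S)"
definition ints :: "'a vpalph \<Rightarrow> 'a set" where "ints S = snd (snd S)"
definition letters :: "'a vpalph \<Rightarrow> 'a set" where
  "letters S = calls S \<union> rets S \<union> ints S"

definition vp_alphabet :: "'a vpalph \<Rightarrow> bool" where
  "vp_alphabet S \<longleftrightarrow> finite (letters S) \<and>
     calls S \<inter> rets S = {} \<and> calls S \<inter> ints S = {} \<and> rets S \<inter> ints S = {}"

definition union_alph :: "nat \<Rightarrow> (nat \<Rightarrow> 'a vpalph) \<Rightarrow> 'a vpalph" where
  "union_alph n Sig = ((\<Union>i<n. calls (Sig i)), (\<Union>i<n. rets (Sig i)), (\<Union>i<n. ints (Sig i)))"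

definition disjoint_vp_alphabets :: "nat \<Rightarrow> (nat \<Rightarrow> 'a vpalph) \<Rightarrow> bool" where
  "disjoint_vp_alphabets n Sig \<longleftrightarrow> (\<forall>i<n. vp_alphabet (Sig i)) \<and>
     (\<forall>i<n. \<forall>j<n. i \<noteq> j \<longrightarrow> letters (Sig i) \<inter> letters (Sig j) = {})"

record ('s, 'g, 'a) vpa =
  states :: "'s set"
  init :: "'s set"
  stk :: "'g set"
  bot :: 'g
  dcall :: "('s \<times> 'a \<times> 's \<times> 'g) set"
  dret :: "('s \<times> 'a \<times> 'g \<times> 's) set"
  dint :: "('s \<times> 'a \<times> 's) set"
  final :: "'s set"

definition wf_vpa :: "'a vpalph \<Rightarrow> ('s, 'g, 'a) vpa \<Rightarrow> bool" where
  "wf_vpa S A \<longleftrightarrow> finite (states A) \<and> finite (stk A) \<and> bot A \<in> stk A \<and>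
     init A \<subseteq> states A \<and> final A \<subseteq> states A \<and>
     dcall A \<subseteq> states A \<times> calls S \<times> states A \<times> (stk A - {bot A}) \<and>
     dret A \<subseteq> states A \<times> rets S \<times> stk A \<times> states A \<and>
     dint A \<subseteq> states A \<times> ints S \<times> states A"

text \<open>Configurations: a state and the stack content above the bottom symbol
  (head = top); the empty list means that only the bottom symbol is present.\<close>
inductive vpa_step :: "'a vpalph \<Rightarrow> ('s, 'g, 'a) vpa \<Rightarrow> 's \<times> 'g list \<Rightarrow> 'a \<Rightarrow> 's \<times> 'g list \<Rightarrow> bool"
  for S A where
  call: "a \<in> calls S \<Longrightarrow> (q, a, q', g) \<in> dcall A \<Longrightarrow> vpa_step S A (q, s) a (q', g # s)"
| ret: "a \<in> rets S \<Longrightarrow> (q, a, g, q') \<in> dret A \<Longrightarrow> vpa_step S A (q, g # s) a (q', s)"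
| ret_bot: "a \<in> rets S \<Longrightarrow> (q, a, bot A, q') \<in> dret A \<Longrightarrow> vpa_step S A (q, []) a (q', [])"
| int: "a \<in> ints S \<Longrightarrow> (q, a, q') \<in> dint A \<Longrightarrow> vpa_step S A (q, s) a (q', s)"

inductive vpa_reach :: "'a vpalph \<Rightarrow> ('s, 'g, 'a) vpa \<Rightarrow> 's \<times> 'g list \<Rightarrow> 'a list \<Rightarrow> 's \<times> 'g list \<Rightarrow> bool"
  for S A where
  nil: "vpa_reach S A c [] c"
| cons: "vpa_step S A c a c' \<Longrightarrow> vpa_reach S A c' w c'' \<Longrightarrow> vpa_reach S A c (a # w) c''"

definition vpa_lang :: "'a vpalph \<Rightarrow> ('s, 'g, 'a) vpa \<Rightarrow> 'a list set" where
  "vpa_lang S A = {w \<in> lists (letters S). \<exists>q0\<in>init A. \<exists>q s. vpa_reach S A (q0, []) w (q, s) \<and> q \<in> final A}"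

definition deterministic_vpa :: "'a vpalph \<Rightarrow> ('s, 'g, 'a) vpa \<Rightarrow> bool" where
  "deterministic_vpa S A \<longleftrightarrow> (\<exists>q0. init A = {q0}) \<and>
     (\<forall>q a q1 g1 q2 g2. (q, a, q1, g1) \<in> dcall A \<and> (q, a, q2, g2) \<in> dcall A \<longrightarrow> q1 = q2 \<and> g1 = g2) \<and>
     (\<forall>q a g q1 q2. (q, a, g, q1) \<in> dret A \<and> (q, a, g, q2) \<in> dret A \<longrightarrow> q1 = q2) \<and>
     (\<forall>q a q1 q2. (q, a, q1) \<in> dint A \<and> (q, a, q2) \<in> dint A \<longrightarrow> q1 = q2)"

definition complete_vpa :: "'a vpalph \<Rightarrow> ('s, 'g, 'a) vpa \<Rightarrow> bool" where
  "complete_vpa S A \<longleftrightarrow> init A \<noteq> {} \<and>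
     (\<forall>q\<in>states A. \<forall>a\<in>calls S. \<exists>q' g. (q, a, q', g) \<in> dcall A) \<and>
     (\<forall>q\<in>states A. \<forall>a\<in>rets S. \<forall>g\<in>stk A. \<exists>q'. (q, a, g, q') \<in> dret A) \<and>
     (\<forall>q\<in>states A. \<forall>a\<in>ints S. \<exists>q'. (q, a, q') \<in> dint A)"

text \<open>A VP language: accepted by some VPA (states and stack symbols are taken
  w.l.o.g. to be natural numbers, any finite sets can be renamed into nat).\<close>
definition vp_language :: "'a vpalph \<Rightarrow> 'a list set \<Rightarrow> bool" where
  "vp_language S L \<longleftrightarrow> (\<exists>A :: (nat, nat, 'a) vpa. wf_vpa S A \<and> vpa_lang S A = L)"

definition strict_total_on :: "'a set \<Rightarrow> ('a \<times> 'a) set \<Rightarrow> bool" where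
  "strict_total_on X r \<longleftrightarrow> r \<subseteq> X \<times> X \<and> (\<forall>x. (x, x) \<notin> r) \<and> trans r \<and> total_on X r"

definition contextual_order :: "'a set \<Rightarrow> ('a list \<Rightarrow> ('a \<times> 'a) set) \<Rightarrow> bool" where
  "contextual_order X prec \<longleftrightarrow> (\<forall>x\<in>lists X. strict_total_on X (prec x))"

definition ctx_le :: "('a list \<Rightarrow> ('a \<times> 'a) set) \<Rightarrow> 'a list \<Rightarrow> 'a list \<Rightarrow> bool" where
  "ctx_le prec \<sigma> \<rho> \<longleftrightarrow> (\<exists>\<tau>. \<rho> = \<sigma> @ \<tau>) \<or>
     (\<exists>\<alpha> a \<beta> b \<gamma>. \<sigma> = \<alpha> @ a # \<beta> \<and> \<rho> = \<alpha> @ b # \<gamma> \<and> (a, b) \<in> prec \<alpha>)"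

definition indep :: "nat \<Rightarrow> (nat \<Rightarrow> 'a vpalph) \<Rightarrow> 'a \<Rightarrow> 'a \<Rightarrow> bool" where
  "indep n Sig a b \<longleftrightarrow> (\<exists>i<n. \<exists>j<n. i \<noteq> j \<and> a \<in> letters (Sig i) \<and> b \<in> letters (Sig j))"

inductive swap_step :: "nat \<Rightarrow> (nat \<Rightarrow> 'a vpalph) \<Rightarrow> 'a list \<Rightarrow> 'a list \<Rightarrow> bool"
  for n Sig where
  "indep n Sig a b \<Longrightarrow> swap_step n Sig (u @ a # b # v) (u @ b # a # v)"

definition trace_equiv :: "nat \<Rightarrow> (nat \<Rightarrow> 'a vpalph) \<Rightarrow> 'a list \<Rightarrow> 'a list \<Rightarrow> bool" where
  "trace_equiv n Sig = (swap_step n Sig)\<^sup>*\<^sup>*"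

definition red :: "nat \<Rightarrow> (nat \<Rightarrow> 'a vpalph) \<Rightarrow> ('a list \<Rightarrow> ('a \<times> 'a) set) \<Rightarrow> 'a list set \<Rightarrow> 'a list set" where
  "red n Sig prec L = {w \<in> L. \<forall>u\<in>L. trace_equiv n Sig u w \<and> ctx_le prec u w \<longrightarrow> u = w}"

definition vp_contextual_order :: "'a vpalph \<Rightarrow> ('a list \<Rightarrow> ('a \<times> 'a) set) \<Rightarrow> bool" where
  "vp_contextual_order S prec \<longleftrightarrow>
     (\<exists>(A :: (nat, nat, 'a) vpa) ord. wf_vpa S A \<and> deterministic_vpa S A \<and> complete_vpa S A \<and>
        (\<forall>q\<in>states A. strict_total_on (letters S) (ord q)) \<and>
        (\<forall>w\<in>lists (letters S). \<forall>q0\<in>init A. \<forall>q s.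
            vpa_reach S A (q0, []) w (q, s) \<longrightarrow> prec w = ord q))"

end

theory Submission
  imports Defs
begin

(*
  A word w is reduced iff it never reads a letter a right after a prefix \<alpha> b v such that
  a \<prec>\<^sub>\<alpha> b and a is independent of every letter of b v: otherwise \<alpha> a b v is an
  equivalent smaller word.  Conversely, if u is equivalent to w and smaller, then at their first
  difference u reads a and w reads b with a \<prec>\<^sub>\<alpha> b, and projecting both words onto the
  component of a shows that this occurrence of a was moved in w to the right over letters
  independent of it.

  The set of letters blocked after w c is determined by the set blocked after w, the letter c
  and the order \<prec>\<^sub>w, which the deterministic VPA defining \<prec> reads off its state.  The
  product of that VPA with the finite powerset of the alphabet, without transitions on blocked
  letters, therefore accepts exactly the reduced words.
*)

section \<open>Runs of visibly pushdown automata\<close>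

lemma vpa_reach_Nil_iff: "vpa_reach S A c [] c' \<longleftrightarrow> c' = c"
  by (auto elim: vpa_reach.cases intro: vpa_reach.intros)

lemma vpa_reach_Cons_iff:
  "vpa_reach S A c (a # w) c'' \<longleftrightarrow> (\<exists>c'. vpa_step S A c a c' \<and> vpa_reach S A c' w c'')"
  by (blast elim: vpa_reach.cases intro: vpa_reach.intros)

lemma vpa_reach_append_iff:
  "vpa_reach S A c (u @ v) c'' \<longleftrightarrow> (\<exists>c'. vpa_reach S A c u c' \<and> vpa_reach S A c' v c'')"
  by (induction u arbitrary: c) (auto simp: vpa_reach_Nil_iff vpa_reach_Cons_iff)

lemma vpa_reach_snoc_iff:
  "vpa_reach S A c (w @ [a]) c'' \<longleftrightarrow> (\<exists>c'. vpa_reach S A c w c' \<and> vpa_step S A c' a c'')"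
  unfolding vpa_reach_append_iff vpa_reach_Cons_iff vpa_reach_Nil_iff by blast

lemma vpa_step_preserves_wf_config:
  assumes "wf_vpa S A" "vpa_step S A c a c'" "fst c \<in> states A" "set (snd c) \<subseteq> stk A"
  shows "fst c' \<in> states A \<and> set (snd c') \<subseteq> stk A"
  using assms(2) by cases (use assms in \<open>auto simp: wf_vpa_def\<close>)

lemma vpa_reach_preserves_wf_config:
  assumes "wf_vpa S A" "vpa_reach S A c w c'" "fst c \<in> states A" "set (snd c) \<subseteq> stk A"
  shows "fst c' \<in> states A \<and> set (snd c') \<subseteq> stk A"
  using assms(2-) by induction (auto dest: vpa_step_preserves_wf_config[OF assms(1)])

lemma complete_vpa_step_exists:
  assumes "wf_vpa S A" "complete_vpa S A" "p \<in> states A" "set s \<subseteq> stk A" "a \<in> letters S"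
  shows "\<exists>c'. vpa_step S A (p, s) a c'"
proof -
  consider "a \<in> calls S" | "a \<in> rets S" | "a \<in> ints S"
    using assms(5) unfolding letters_def by blast
  then show ?thesis
  proof cases
    case 1
    then show ?thesis using assms(2,3) unfolding complete_vpa_def by (blast intro: vpa_step.call)
  next
    case 2
    have "bot A \<in> stk A" using assms(1) unfolding wf_vpa_def by blast
    show ?thesis
    proof (cases s)
      case Nil
      then show ?thesis using 2 \<open>bot A \<in> stk A\<close> assms(2,3) unfolding complete_vpa_def
        by (blast intro: vpa_step.ret_bot)
    next
      case (Cons g s\<^sub>0)
      with assms(4) have "g \<in> stk A" by simp
      then show ?thesis using Cons 2 assms(2,3) unfolding complete_vpa_def
        by (blast intro: vpa_step.ret)
    qed
  next
    case 3
    then show ?thesis using assms(2,3) unfolding complete_vpa_def by (blast intro: vpa_step.int)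
  qed
qed

lemma complete_vpa_reach_exists:
  assumes "wf_vpa S A" "complete_vpa S A" "w \<in> lists (letters S)" "p \<in> states A" "set s \<subseteq> stk A"
  shows "\<exists>c'. vpa_reach S A (p, s) w c'"
  using assms(3-5)
proof (induction w arbitrary: p s)
  case Nil
  then show ?case by (blast intro: vpa_reach.nil)
next
  case (Cons a w)
  obtain q s' where step: "vpa_step S A (p, s) a (q, s')"
    using complete_vpa_step_exists[OF assms(1,2) Cons.prems Cons.hyps(1)] by force
  then have "q \<in> states A" "set s' \<subseteq> stk A"
    using vpa_step_preserves_wf_config[OF assms(1)] Cons.prems by fastforce+
  then show ?case using Cons.IH step by (blast intro: vpa_reach.cons)
qed

definition rename_states :: "('s \<Rightarrow> 't) \<Rightarrow> ('s, 'g, 'a) vpa \<Rightarrow> ('t, 'g, 'a) vpa" where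
  "rename_states f B = \<lparr>states = f ` states B, init = f ` init B, stk = stk B, bot = bot B,
     dcall = {(f p, a, f q, g) | p a q g. (p, a, q, g) \<in> dcall B},
     dret = {(f p, a, g, f q) | p a g q. (p, a, g, q) \<in> dret B},
     dint = {(f p, a, f q) | p a q. (p, a, q) \<in> dint B},
     final = f ` final B\<rparr>"

lemma vpa_step_rename_states:
  assumes "vpa_step S B c a c'"
  shows "vpa_step S (rename_states f B) (f (fst c), snd c) a (f (fst c'), snd c')"
  using assms
proof cases
  case call
  then show ?thesis by (auto simp: rename_states_def intro!: vpa_step.call) blast
next
  case ret
  then show ?thesis by (auto simp: rename_states_def intro!: vpa_step.ret) blast
next
  case ret_bot
  then show ?thesis by (auto simp: rename_states_def intro!: vpa_step.ret_bot) blast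
next
  case int
  then show ?thesis by (auto simp: rename_states_def intro!: vpa_step.int) blast
qed

lemma vpa_reach_rename_states:
  "vpa_reach S B c w c' \<Longrightarrow> vpa_reach S (rename_states f B) (f (fst c), snd c) w (f (fst c'), snd c')"
proof (induction rule: vpa_reach.induct)
  case nil
  show ?case by (rule vpa_reach.nil)
next
  case cons
  then show ?case by (blast intro: vpa_reach.cons vpa_step_rename_states)
qed

lemma vpa_lang_rename_states: "vpa_lang S B \<subseteq> vpa_lang S (rename_states f B)"
proof
  fix w assume "w \<in> vpa_lang S B"
  then obtain p q s where "w \<in> lists (letters S)" "p \<in> init B" "q \<in> final B"
    "vpa_reach S B (p, []) w (q, s)"
    unfolding vpa_lang_def by blast
  then show "w \<in> vpa_lang S (rename_states f B)"
    unfolding vpa_lang_def using vpa_reach_rename_states[of S B "(p, [])" w "(q, s)" f]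
    by (auto simp: rename_states_def)
qed

lemma rename_states_inv_into:
  assumes "wf_vpa S B" "inj_on f (states B)"
  shows "rename_states (inv_into (states B) f) (rename_states f B) = B"
proof -
  let ?g = "inv_into (states B) f"
  have gf [simp]: "?g (f p) = p" if "p \<in> states B" for p
    using assms(2) that by simp
  have image: "?g ` f ` X = X" if "X \<subseteq> states B" for X
    using that by (force simp: image_image)
  have "dcall B \<subseteq> states B \<times> UNIV \<times> states B \<times> UNIV" "dret B \<subseteq> states B \<times> UNIV \<times> UNIV \<times> states B"
    "dint B \<subseteq> states B \<times> UNIV \<times> states B" "init B \<subseteq> states B" "final B \<subseteq> states B"
    using assms(1) unfolding wf_vpa_def by blast+
  then show ?thesis
    unfolding rename_states_def
    by (intro vpa.equality; simp add: image; auto simp: subset_iff; metis gf)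
qed

lemma wf_vpa_rename_states: "wf_vpa S B \<Longrightarrow> wf_vpa S (rename_states f B)"
  unfolding wf_vpa_def rename_states_def by fastforce

lemma vp_language_vpa_lang:
  fixes B :: "('s, nat, 'a) vpa"
  assumes "wf_vpa S B" "finite (states B)"
  shows "vp_language S (vpa_lang S B)"
proof -
  obtain f :: "'s \<Rightarrow> nat" where f: "inj_on f (states B)"
    using finite_imp_inj_to_nat_seg[OF assms(2)] by blast
  have "vpa_lang S (rename_states f B) = vpa_lang S B"
    using vpa_lang_rename_states[of S B f]
      vpa_lang_rename_states[of S "rename_states f B" "inv_into (states B) f"]
    unfolding rename_states_inv_into[OF assms(1) f] by blast
  then show ?thesis
    using wf_vpa_rename_states[OF assms(1)] unfolding vp_language_def by blast
qed

section \<open>Trace equivalence over disjoint components\<close>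

lemma letters_union_alph: "letters (union_alph n Sig) = (\<Union>i<n. letters (Sig i))"
  by (auto simp: letters_def union_alph_def calls_def rets_def ints_def)

lemma indep_letters: "indep n Sig a c \<Longrightarrow> a \<in> letters (union_alph n Sig) \<and> c \<in> letters (union_alph n Sig)"
  by (auto simp: indep_def letters_union_alph)

lemma indepI:
  "k < n \<Longrightarrow> a \<in> letters (Sig k) \<Longrightarrow> c \<in> letters (union_alph n Sig) \<Longrightarrow> c \<notin> letters (Sig k) \<Longrightarrow>
    indep n Sig a c"
  unfolding indep_def letters_union_alph by blast

lemma trace_equiv_length: "trace_equiv n Sig u w \<Longrightarrow> length u = length w"
  unfolding trace_equiv_def by (induction rule: rtranclp_induct) (auto elim: swap_step.cases)

lemma trace_equiv_move:
  "\<forall>c\<in>set v. indep n Sig a c \<Longrightarrow> trace_equiv n Sig (x @ a # v @ y) (x @ v @ a # y)"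
proof (induction v arbitrary: x)
  case Nil
  then show ?case by (simp add: trace_equiv_def)
next
  case (Cons c v)
  have "swap_step n Sig (x @ a # c # v @ y) (x @ c # a # v @ y)"
    using Cons.prems by (auto intro: swap_step.intros)
  moreover have "trace_equiv n Sig ((x @ [c]) @ a # v @ y) ((x @ [c]) @ v @ a # y)"
    using Cons.IH[of "x @ [c]"] Cons.prems by simp
  ultimately show ?case
    unfolding trace_equiv_def by (simp add: converse_rtranclp_into_rtranclp)
qed

locale vp_components =
  fixes n :: nat and Sig :: "nat \<Rightarrow> 'a vpalph"
  assumes disjoint: "disjoint_vp_alphabets n Sig"
begin

abbreviation VP :: "'a vpalph" where "VP \<equiv> union_alph n Sig"

abbreviation \<Sigma> :: "'a set" where "\<Sigma> \<equiv> letters VP"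

lemma finite_letters: "finite \<Sigma>"
  using disjoint unfolding letters_union_alph disjoint_vp_alphabets_def vp_alphabet_def by auto

lemma component_unique:
  "i < n \<Longrightarrow> j < n \<Longrightarrow> a \<in> letters (Sig i) \<Longrightarrow> a \<in> letters (Sig j) \<Longrightarrow> i = j"
  using disjoint unfolding disjoint_vp_alphabets_def by blast

lemma not_indep_self: "\<not> indep n Sig a a"
  using component_unique by (auto simp: indep_def)

lemma trace_equiv_filter_component:
  assumes "k < n" "trace_equiv n Sig u w"
  shows "filter (\<lambda>c. c \<in> letters (Sig k)) u = filter (\<lambda>c. c \<in> letters (Sig k)) w"
  using assms(2) unfolding trace_equiv_def
proof (induction rule: rtranclp_induct)
  case (step v w)
  from step.hyps(2) show ?case
  proof cases
    case (1 a b x y)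
    then have "\<not> (a \<in> letters (Sig k) \<and> b \<in> letters (Sig k))"
      using component_unique assms(1) unfolding indep_def by metis
    then show ?thesis using step.IH 1 by auto
  qed
qed simp

lemma trace_equiv_first_difference:
  assumes "trace_equiv n Sig u w" and "u = \<alpha> @ a # \<beta>" "w = \<alpha> @ b # \<gamma>" "a \<noteq> b"
    and "a \<in> \<Sigma>" "w \<in> lists \<Sigma>"
  shows "\<exists>v \<delta>. \<gamma> = v @ a # \<delta> \<and> (\<forall>c\<in>set (b # v). indep n Sig a c)"
proof -
  obtain k where k: "k < n" "a \<in> letters (Sig k)"
    using assms(5) unfolding letters_union_alph by blast
  let ?P = "\<lambda>c. c \<in> letters (Sig k)"
  have "filter ?P (b # \<gamma>) = a # filter ?P \<beta>"
    using trace_equiv_filter_component[OF k(1) assms(1)] assms(2,3) k(2) by simp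
  then obtain us \<delta> where split: "b # \<gamma> = us @ a # \<delta>" "\<forall>c\<in>set us. \<not> ?P c"
    using filter_eq_ConsD by metis
  with assms(4) obtain v where "us = b # v" "\<gamma> = v @ a # \<delta>"
    by (cases us) auto
  moreover have "\<forall>c\<in>set (b # v). indep n Sig a c"
    using split calculation assms(3,6) k by (auto intro: indepI)
  ultimately show ?thesis by blast
qed

end

section \<open>Reduced words\<close>

locale vp_reduction = vp_components +
  fixes prec :: "'a list \<Rightarrow> ('a \<times> 'a) set"
  assumes contextual: "contextual_order \<Sigma> prec"
begin

lemma prec_irrefl: "\<alpha> \<in> lists \<Sigma> \<Longrightarrow> (a, a) \<notin> prec \<alpha>"
  using contextual unfolding contextual_order_def strict_total_on_def by blast

lemma prec_letters: "\<alpha> \<in> lists \<Sigma> \<Longrightarrow> (a, b) \<in> prec \<alpha> \<Longrightarrow> a \<in> \<Sigma>"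
  using contextual unfolding contextual_order_def strict_total_on_def by blast

definition blocked :: "'a list \<Rightarrow> 'a set" where
  "blocked w = {a. \<exists>\<alpha> b v. w = \<alpha> @ b # v \<and> (a, b) \<in> prec \<alpha> \<and> (\<forall>c\<in>set (b # v). indep n Sig a c)}"

definition never_blocked :: "'a list \<Rightarrow> bool" where
  "never_blocked w \<longleftrightarrow> (\<forall>v a \<beta>. w = v @ a # \<beta> \<longrightarrow> a \<notin> blocked v)"

definition blocked_step :: "('a \<times> 'a) set \<Rightarrow> 'a set \<Rightarrow> 'a \<Rightarrow> 'a set" where
  "blocked_step r T c = {a. (a \<in> T \<or> (a, c) \<in> r) \<and> indep n Sig a c}"

lemma blocked_Nil: "blocked [] = {}"
  by (simp add: blocked_def)

lemma blocked_snoc: "blocked (w @ [c]) = blocked_step (prec w) (blocked w) c"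
proof (intro set_eqI iffI)
  fix a assume "a \<in> blocked (w @ [c])"
  then obtain \<alpha> b v where a: "w @ [c] = \<alpha> @ b # v" "(a, b) \<in> prec \<alpha>" "\<forall>c\<in>set (b # v). indep n Sig a c"
    unfolding blocked_def by blast
  show "a \<in> blocked_step (prec w) (blocked w) c"
  proof (cases v rule: rev_exhaust)
    case Nil
    with a show ?thesis by (auto simp: blocked_step_def)
  next
    case (snoc v' d)
    with a have "w = \<alpha> @ b # v'" "indep n Sig a c" by auto
    with a have "a \<in> blocked w"
      unfolding blocked_def using snoc by auto
    with \<open>indep n Sig a c\<close> show ?thesis unfolding blocked_step_def by blast
  qed
next
  fix a assume a: "a \<in> blocked_step (prec w) (blocked w) c"
  then have "indep n Sig a c"
    unfolding blocked_step_def by blast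
  from a consider "a \<in> blocked w" | "(a, c) \<in> prec w"
    unfolding blocked_step_def by blast
  then show "a \<in> blocked (w @ [c])"
  proof cases
    case 1
    then obtain \<alpha> b v where "w = \<alpha> @ b # v" "(a, b) \<in> prec \<alpha>"
      "\<forall>c\<in>set (b # v). indep n Sig a c"
      unfolding blocked_def by blast
    with \<open>indep n Sig a c\<close> show ?thesis
      unfolding blocked_def by (intro CollectI exI[of _ \<alpha>] exI[of _ b] exI[of _ "v @ [c]"]) auto
  next
    case 2
    with \<open>indep n Sig a c\<close> show ?thesis
      unfolding blocked_def by (intro CollectI exI[of _ w] exI[of _ c] exI[of _ "[]"]) auto
  qed
qed

lemma blocked_letters: "blocked w \<subseteq> \<Sigma>"
  unfolding blocked_def by (auto dest: indep_letters)

lemma blocked_step_letters: "blocked_step r T c \<subseteq> \<Sigma>"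
  unfolding blocked_step_def by (auto dest: indep_letters)

lemma never_blocked_Nil: "never_blocked []"
  by (simp add: never_blocked_def)

lemma never_blocked_snoc: "never_blocked (w @ [c]) \<longleftrightarrow> never_blocked w \<and> c \<notin> blocked w"
proof
  assume nb: "never_blocked (w @ [c])"
  have "a \<notin> blocked v" if "w = v @ a # \<beta>" for v a \<beta>
    using nb that unfolding never_blocked_def by (metis append_Cons append_assoc)
  with nb show "never_blocked w \<and> c \<notin> blocked w"
    unfolding never_blocked_def by blast
next
  assume nb: "never_blocked w \<and> c \<notin> blocked w"
  show "never_blocked (w @ [c])"
    unfolding never_blocked_def
  proof (intro allI impI)
    fix v a \<beta> assume w: "w @ [c] = v @ a # \<beta>"
    show "a \<notin> blocked v"
    proof (cases \<beta> rule: rev_exhaust)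
      case Nil
      with w nb show ?thesis by simp
    next
      case (snoc \<beta>' d)
      with w have "w = v @ a # \<beta>'" by simp
      with nb show ?thesis unfolding never_blocked_def by blast
    qed
  qed
qed

lemma never_blocked_if_red:
  assumes "w \<in> red n Sig prec (lists \<Sigma>)"
  shows "never_blocked w"
  unfolding never_blocked_def
proof (intro allI impI notI)
  fix v a \<beta> assume w: "w = v @ a # \<beta>" and "a \<in> blocked v"
  then obtain \<alpha> b u where v: "v = \<alpha> @ b # u" and "(a, b) \<in> prec \<alpha>"
    and indep: "\<forall>c\<in>set (b # u). indep n Sig a c"
    unfolding blocked_def by blast
  define u' where "u' = \<alpha> @ a # (b # u) @ \<beta>"
  have "trace_equiv n Sig u' w"
    unfolding u'_def w v using trace_equiv_move[OF indep, of \<alpha> \<beta>] by simp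
  moreover have "ctx_le prec u' w"
    unfolding ctx_le_def u'_def w v using \<open>(a, b) \<in> prec \<alpha>\<close> by fastforce
  moreover have "u' \<in> lists \<Sigma>"
    using assms indep indep_letters unfolding u'_def w v red_def by auto
  ultimately have "u' = w"
    using assms unfolding red_def by blast
  then show False
    using indep not_indep_self unfolding u'_def w v by simp
qed

lemma red_if_never_blocked:
  assumes "w \<in> lists \<Sigma>" "never_blocked w"
  shows "w \<in> red n Sig prec (lists \<Sigma>)"
  unfolding red_def
proof (intro CollectI conjI ballI impI assms(1))
  fix u assume "u \<in> lists \<Sigma>" and equiv: "trace_equiv n Sig u w \<and> ctx_le prec u w"
  then consider \<tau> where "w = u @ \<tau>"
    | \<alpha> a \<beta> b \<gamma> where "u = \<alpha> @ a # \<beta>" "w = \<alpha> @ b # \<gamma>" "(a, b) \<in> prec \<alpha>"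
    unfolding ctx_le_def by blast
  then show "u = w"
  proof cases
    case 1
    then show ?thesis using equiv trace_equiv_length by fastforce
  next
    case 2
    have "\<alpha> \<in> lists \<Sigma>" using assms(1) 2 by simp
    then have "a \<noteq> b" "a \<in> \<Sigma>" using 2 prec_irrefl prec_letters by auto
    then obtain v \<delta> where "\<gamma> = v @ a # \<delta>" "\<forall>c\<in>set (b # v). indep n Sig a c"
      using trace_equiv_first_difference[of u w] equiv 2 assms(1) by blast
    with 2 have "w = (\<alpha> @ b # v) @ a # \<delta>" "a \<in> blocked (\<alpha> @ b # v)"
      unfolding blocked_def by auto
    then show ?thesis using assms(2) unfolding never_blocked_def by blast
  qed
qed

lemma red_iff_never_blocked:
  "w \<in> red n Sig prec (lists \<Sigma>) \<longleftrightarrow> w \<in> lists \<Sigma> \<and> never_blocked w"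
  using never_blocked_if_red red_if_never_blocked unfolding red_def by blast

end

section \<open>A visibly pushdown automaton for the reduced words\<close>

locale vp_reduction_automaton = vp_reduction +
  fixes A :: "(nat, nat, 'a) vpa" and ord :: "nat \<Rightarrow> ('a \<times> 'a) set" and q\<^sub>0 :: nat
  assumes wf_A: "wf_vpa VP A"
    and complete_A: "complete_vpa VP A"
    and init_A: "init A = {q\<^sub>0}"
    and prec_run: "\<And>w q s. w \<in> lists \<Sigma> \<Longrightarrow> vpa_reach VP A (q\<^sub>0, []) w (q, s) \<Longrightarrow> prec w = ord q"
begin

definition red_vpa :: "(nat \<times> 'a set, nat, 'a) vpa" where
  "red_vpa = \<lparr>states = states A \<times> Pow \<Sigma>, init = {(q\<^sub>0, {})}, stk = stk A, bot = bot A,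
     dcall = {((q, T), c, (q', blocked_step (ord q) T c), g) | q T c q' g.
        (q, c, q', g) \<in> dcall A \<and> T \<subseteq> \<Sigma> \<and> c \<notin> T},
     dret = {((q, T), c, g, (q', blocked_step (ord q) T c)) | q T c g q'.
        (q, c, g, q') \<in> dret A \<and> T \<subseteq> \<Sigma> \<and> c \<notin> T},
     dint = {((q, T), c, (q', blocked_step (ord q) T c)) | q T c q'.
        (q, c, q') \<in> dint A \<and> T \<subseteq> \<Sigma> \<and> c \<notin> T},
     final = states A \<times> Pow \<Sigma>\<rparr>"

lemma q0_state: "q\<^sub>0 \<in> states A"
  using wf_A init_A unfolding wf_vpa_def by auto

lemma wf_red_vpa: "wf_vpa VP red_vpa"
  using wf_A finite_letters blocked_step_letters q0_state unfolding wf_vpa_def red_vpa_def by auto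

lemma finite_states_red_vpa: "finite (states red_vpa)"
  using wf_A finite_letters unfolding wf_vpa_def red_vpa_def by auto

lemma vpa_step_red_vpa_iff:
  "vpa_step VP red_vpa ((q, T), s) c ((q', T'), s') \<longleftrightarrow>
    vpa_step VP A (q, s) c (q', s') \<and> T \<subseteq> \<Sigma> \<and> c \<notin> T \<and> T' = blocked_step (ord q) T c"
proof
  assume "vpa_step VP red_vpa ((q, T), s) c ((q', T'), s')"
  then show "vpa_step VP A (q, s) c (q', s') \<and> T \<subseteq> \<Sigma> \<and> c \<notin> T \<and> T' = blocked_step (ord q) T c"
    by cases (auto simp: red_vpa_def intro: vpa_step.intros)
next
  assume step: "vpa_step VP A (q, s) c (q', s') \<and> T \<subseteq> \<Sigma> \<and> c \<notin> T \<and> T' = blocked_step (ord q) T c"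
  then have "vpa_step VP A (q, s) c (q', s')" by blast
  then show "vpa_step VP red_vpa ((q, T), s) c ((q', T'), s')"
    by cases (use step in \<open>auto simp: red_vpa_def intro: vpa_step.intros\<close>)
qed

lemma vpa_reach_red_vpa_iff:
  assumes "w \<in> lists \<Sigma>"
  shows "vpa_reach VP red_vpa ((q\<^sub>0, {}), []) w ((q, T), s) \<longleftrightarrow>
    vpa_reach VP A (q\<^sub>0, []) w (q, s) \<and> T = blocked w \<and> never_blocked w"
  using assms
proof (induction w arbitrary: q T s rule: rev_induct)
  case Nil
  then show ?case by (auto simp: vpa_reach_Nil_iff blocked_Nil never_blocked_Nil)
next
  case (snoc c w)
  then have w: "w \<in> lists \<Sigma>" by simp
  have "vpa_reach VP red_vpa ((q\<^sub>0, {}), []) (w @ [c]) ((q, T), s) \<longleftrightarrow>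
    (\<exists>q' s'. vpa_reach VP A (q\<^sub>0, []) w (q', s') \<and> never_blocked w \<and>
      vpa_step VP A (q', s') c (q, s) \<and> c \<notin> blocked w \<and> T = blocked_step (ord q') (blocked w) c)"
    unfolding vpa_reach_snoc_iff using snoc.IH[OF w] vpa_step_red_vpa_iff blocked_letters by fastforce
  also have "\<dots> \<longleftrightarrow> (\<exists>q' s'. vpa_reach VP A (q\<^sub>0, []) w (q', s') \<and> vpa_step VP A (q', s') c (q, s)) \<and>
      T = blocked (w @ [c]) \<and> never_blocked (w @ [c])"
    unfolding blocked_snoc never_blocked_snoc using prec_run[OF w] by metis
  finally show ?case
    unfolding vpa_reach_snoc_iff by auto
qed

lemma vpa_lang_red_vpa: "vpa_lang VP red_vpa = red n Sig prec (lists \<Sigma>)"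
proof (intro set_eqI iffI)
  fix w assume "w \<in> vpa_lang VP red_vpa"
  then obtain q T s where "w \<in> lists \<Sigma>" "vpa_reach VP red_vpa ((q\<^sub>0, {}), []) w ((q, T), s)"
    unfolding vpa_lang_def red_vpa_def by auto
  then show "w \<in> red n Sig prec (lists \<Sigma>)"
    using vpa_reach_red_vpa_iff red_iff_never_blocked by blast
next
  fix w assume "w \<in> red n Sig prec (lists \<Sigma>)"
  then have w: "w \<in> lists \<Sigma>" "never_blocked w"
    using red_iff_never_blocked by blast+
  then obtain q s where run: "vpa_reach VP A (q\<^sub>0, []) w (q, s)"
    using complete_vpa_reach_exists[OF wf_A complete_A w(1) q0_state] by force
  then have "q \<in> states A"
    using vpa_reach_preserves_wf_config[OF wf_A run] q0_state by simp
  then show "w \<in> vpa_lang VP red_vpa"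
    using w run vpa_reach_red_vpa_iff[OF w(1), of q "blocked w" s] blocked_letters
    unfolding vpa_lang_def by (auto simp: red_vpa_def)
qed

end

theorem proposition3p12:
  fixes n :: nat and Sig :: "nat \<Rightarrow> 'a vpalph" and prec :: "'a list \<Rightarrow> ('a \<times> 'a) set"
  assumes "disjoint_vp_alphabets n Sig"
    and "contextual_order (letters (union_alph n Sig)) prec"
    and "vp_contextual_order (union_alph n Sig) prec"
  shows "vp_language (union_alph n Sig) (red n Sig prec (lists (letters (union_alph n Sig))))"
proof -
  obtain A :: "(nat, nat, 'a) vpa" and ord where A:
    "wf_vpa (union_alph n Sig) A" "deterministic_vpa (union_alph n Sig) A"
    "complete_vpa (union_alph n Sig) A"
    "\<forall>w\<in>lists (letters (union_alph n Sig)). \<forall>q\<^sub>0\<in>init A. \<forall>q s.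
       vpa_reach (union_alph n Sig) A (q\<^sub>0, []) w (q, s) \<longrightarrow> prec w = ord q"
    using assms(3) unfolding vp_contextual_order_def by blast
  obtain q\<^sub>0 where "init A = {q\<^sub>0}"
    using A(2) unfolding deterministic_vpa_def by blast
  then interpret vp_reduction_automaton n Sig prec A ord q\<^sub>0
    using assms(1,2) A(1,3,4) by unfold_locales auto
  show ?thesis
    using vp_language_vpa_lang[OF wf_red_vpa finite_states_red_vpa] vpa_lang_red_vpa by simp
qed

end
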